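(* Let $\alpha: I\to M$ be a unit-speed curve on an oriented surface $M\subset E^3$ with Darboux frame $\{T,V,U\}$ and curvatures $k_g,k_n,\tau_g$, and assume $(k_n(s),\tau_g(s))\neq(0,0)$ for all $s$. Let $\gamma(s)=\alpha(s)+y_1(s)T(s)+y_2(s)V(s)+y_3(s)U(s)$, with $y_i$ smooth, be an associated curve whose tangent $\gamma'(s)$ is linearly dependent with $U(s)$, i.e. $\gamma'(s)=R(s)U(s)$ with $R(s)\neq0$ for all $s$. Then the following are equivalent: (i) $\gamma$ is a general helix; (ii) $\alpha$ is an isophote curve; (iii) $\alpha$ is a $D_o$-Darboux slant helix.
   Context: $M$ is an oriented surface in Euclidean 3-space $E^3$ and $\alpha:I\to M$ is a unit-speed curve with arc-length parameter $s$. Its Darboux frame $\{T,V,U\}$ consists of the unit tangent $T=\alpha'$, the unit surface normal $U$ of $M$ along $\alpha$, and $V=U\times T$; it satisfies $T'=k_gV+k_nU$, $V'=-k_gT+\tau_gU$, $U'=-k_nT-\tau_gV$, where $k_g,k_n,\tau_g$ are the geodesic curvature, normal curvature and geodesic torsion. A regular curve is a general helix if its unit tangent makes a constant angle with a fixed direction. $\alpha$ is an isophote curve if $\langle U,l\rangle$ is constant for some fixed unit vector $l$. The osculating Darboux vector field is $D_o=\tau_gT-k_nV$; $\alpha$ is a $D_o$-Darboux slant helix if $D_o/\|D_o\|$ makes a constant angle with a fixed unit direction. *)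

theory Defs
  imports "HOL-Analysis.Analysis"
begin

definition smooth_on :: "real set \<Rightarrow> (real \<Rightarrow> 'a::real_normed_vector) \<Rightarrow> bool" where
  "smooth_on I f \<longleftrightarrow>
     (\<forall>n. (((\<lambda>g t. vector_derivative g (at t)) ^^ n) f) differentiable_on I)"

text \<open>Darboux frame along a unit-speed curve alpha on I, with geodesic curvature kg,
  normal curvature kn and geodesic torsion tg; U is the unit surface normal along alpha.\<close>
definition darboux_frame ::
  "real set \<Rightarrow> (real \<Rightarrow> real^3) \<Rightarrow> (real \<Rightarrow> real^3) \<Rightarrow> (real \<Rightarrow> real^3) \<Rightarrow> (real \<Rightarrow> real^3)
   \<Rightarrow> (real \<Rightarrow> real) \<Rightarrow> (real \<Rightarrow> real) \<Rightarrow> (real \<Rightarrow> real) \<Rightarrow> bool" where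
  "darboux_frame I \<alpha> T V U kg kn tg \<longleftrightarrow>
     (\<forall>s\<in>I.
        (\<alpha> has_vector_derivative T s) (at s) \<and>
        norm (T s) = 1 \<and> norm (U s) = 1 \<and> T s \<bullet> U s = 0 \<and>
        V s = cross3 (U s) (T s) \<and>
        (T has_vector_derivative (kg s *\<^sub>R V s + kn s *\<^sub>R U s)) (at s) \<and>
        (V has_vector_derivative (- kg s *\<^sub>R T s + tg s *\<^sub>R U s)) (at s) \<and>
        (U has_vector_derivative (- kn s *\<^sub>R T s - tg s *\<^sub>R V s)) (at s))"

definition general_helix :: "real set \<Rightarrow> (real \<Rightarrow> real^3) \<Rightarrow> bool" where
  "general_helix I \<gamma> \<longleftrightarrow>
     (\<forall>s\<in>I. \<gamma> differentiable (at s) \<and> vector_derivative \<gamma> (at s) \<noteq> 0) \<and>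
     (\<exists>d c. norm d = 1 \<and>
        (\<forall>s\<in>I. (vector_derivative \<gamma> (at s) /\<^sub>R norm (vector_derivative \<gamma> (at s))) \<bullet> d = c))"

definition isophote :: "real set \<Rightarrow> (real \<Rightarrow> real^3) \<Rightarrow> bool" where
  "isophote I U \<longleftrightarrow> (\<exists>l c. norm l = 1 \<and> (\<forall>s\<in>I. U s \<bullet> l = c))"

definition osc_darboux :: "(real \<Rightarrow> real^3) \<Rightarrow> (real \<Rightarrow> real^3) \<Rightarrow> (real \<Rightarrow> real)
   \<Rightarrow> (real \<Rightarrow> real) \<Rightarrow> real \<Rightarrow> real^3" where
  "osc_darboux T V kn tg s = tg s *\<^sub>R T s - kn s *\<^sub>R V s"

definition Do_darboux_slant_helix :: "real set \<Rightarrow> (real \<Rightarrow> real^3) \<Rightarrow> (real \<Rightarrow> real^3)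
   \<Rightarrow> (real \<Rightarrow> real) \<Rightarrow> (real \<Rightarrow> real) \<Rightarrow> bool" where
  "Do_darboux_slant_helix I T V kn tg \<longleftrightarrow>
     (\<exists>d c. norm d = 1 \<and>
        (\<forall>s\<in>I. (osc_darboux T V kn tg s /\<^sub>R norm (osc_darboux T V kn tg s)) \<bullet> d = c))"

end

theory Submission
  imports Defs
begin

text \<open>
  The Darboux equations give U' = -k_n T - tau_g V, so U' never vanishes and U x U' = D_o:
  the osculating Darboux vector is the normal of U regarded as a curve on the unit sphere.
  Since gamma' = R U with R continuous and nowhere zero, the unit tangent of gamma is
  sgn(R) U with a constant sign, which gives (i) <-> (ii).

  For (ii) <-> (iii) let W = U x U' / |U'|, so that (U, U'/|U'|, W) is the Sabban frame of
  the spherical curve U and W' = -kappa U' with kappa its geodesic curvature.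
  If U.l = c then U'.l = 0, hence (W.l)^2 = 1 - c^2, and the continuous function W.l,
  taking at most two values, is constant.
  Conversely, W.d = c gives kappa (U'.d) = 0. Near a point where kappa /= 0 this forces
  U'.d = 0 and so U''.d = 0, and expanding d in the frame yields c^2 (kappa^2 + 1) = 1.
  Hence the continuous function kappa takes finitely many values and is constant: if it
  vanishes, W is a constant vector orthogonal to U; otherwise U'.d = 0 everywhere and
  U.d is constant.
\<close>

lemma smooth_on_vector_derivative:
  assumes "smooth_on I f"
  shows "smooth_on I (\<lambda>t. vector_derivative f (at t))"
  unfolding smooth_on_def
proof
  fix n
  show "(((\<lambda>g t. vector_derivative g (at t)) ^^ n) (\<lambda>t. vector_derivative f (at t)))
      differentiable_on I"
    using assms[unfolded smooth_on_def, rule_format, of "Suc n"]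
    by (simp only: funpow_Suc_right o_apply)
qed

lemma smooth_on_imp_differentiable_on: "smooth_on I f \<Longrightarrow> f differentiable_on I"
  unfolding smooth_on_def by (drule spec[of _ 0]) simp

lemma smooth_on_imp_continuous_on: "smooth_on I f \<Longrightarrow> continuous_on I f"
  by (simp add: differentiable_imp_continuous_on smooth_on_imp_differentiable_on)

lemma smooth_on_has_vector_derivative:
  assumes "smooth_on I f" "open I" "s \<in> I"
  shows "(f has_vector_derivative vector_derivative f (at s)) (at s)"
proof -
  have "f differentiable (at s)"
    using assms smooth_on_imp_differentiable_on differentiable_on_eq_differentiable_at by blast
  then show ?thesis by (simp add: vector_derivative_works)
qed

lemma has_vector_derivative_eq_0_if_constant_on:
  assumes "open S" "s \<in> S" "(f has_vector_derivative f') (at s)" "f constant_on S"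
  shows "f' = 0"
proof -
  obtain k where "\<forall>t\<in>S. f t = k" using assms(4) by (auto simp: constant_on_def)
  then have "((\<lambda>_. k) has_vector_derivative f') (at s)"
    using has_vector_derivative_transform_within_open[OF assms(3,1,2)] by simp
  then show ?thesis by (metis has_vector_derivative_const vector_derivative_unique_at)
qed

lemma has_vector_derivative_inner:
  fixes f g :: "real \<Rightarrow> 'a::real_inner"
  assumes "(f has_vector_derivative f') (at s)" "(g has_vector_derivative g') (at s)"
  shows "((\<lambda>t. f t \<bullet> g t) has_vector_derivative f s \<bullet> g' + f' \<bullet> g s) (at s)"
  using bounded_bilinear.has_vector_derivative[OF bounded_bilinear_inner, OF assms] .

lemma inner_derivative_eq_0_if_constant_on:
  fixes f g :: "real \<Rightarrow> 'a::real_inner"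
  assumes "open S" "s \<in> S" "(f has_vector_derivative f') (at s)" "(g has_vector_derivative g') (at s)"
    and "\<And>t. t \<in> S \<Longrightarrow> f t \<bullet> g t = k"
  shows "f s \<bullet> g' + f' \<bullet> g s = 0"
  using has_vector_derivative_eq_0_if_constant_on[OF assms(1,2)
      has_vector_derivative_inner[OF assms(3,4)]] assms(5)
  by (auto simp: constant_on_def)

lemma constant_on_if_has_vector_derivative_0:
  assumes "is_interval I" "\<And>s. s \<in> I \<Longrightarrow> (f has_vector_derivative 0) (at s)"
  shows "f constant_on I"
proof -
  obtain c where "\<And>s. s \<in> I \<Longrightarrow> f s = c"
    using has_vector_derivative_zero_constant[OF is_interval_convex[OF assms(1)]] assms(2)
      has_vector_derivative_at_within by blast
  then show ?thesis unfolding constant_on_def by blast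
qed

lemma constant_on_if_finite_range:
  fixes f :: "real \<Rightarrow> real"
  assumes "is_interval I" "continuous_on I f" "finite F" "\<And>s. s \<in> I \<Longrightarrow> f s \<in> F"
  shows "f constant_on I"
proof (rule continuous_finite_range_constant)
  show "connected I" using assms(1) by (rule is_interval_connected)
  show "finite (f ` I)" using assms(3,4) by (meson finite_subset image_subsetI)
qed fact

lemma finite_square_roots: "finite {x::real. x\<^sup>2 = q}"
proof (rule finite_subset)
  show "{x::real. x\<^sup>2 = q} \<subseteq> {sqrt q, - sqrt q}"
    using real_sqrt_abs by force
qed simp

lemma sgn_constant_on_interval:
  fixes R :: "real \<Rightarrow> real"
  assumes "is_interval I" "continuous_on I R" "\<And>s. s \<in> I \<Longrightarrow> R s \<noteq> 0"
  obtains \<sigma> where "\<bar>\<sigma>\<bar> = 1" "\<And>s. s \<in> I \<Longrightarrow> sgn (R s) = \<sigma>"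
proof (cases "I = {}")
  case False
  have "(\<lambda>s. sgn (R s)) constant_on I"
  proof (rule constant_on_if_finite_range[OF assms(1)])
    show "continuous_on I (\<lambda>s. sgn (R s))" using assms(2,3) by (intro continuous_intros) auto
    show "sgn (R s) \<in> {-1, 1}" if "s \<in> I" for s using assms(3)[OF that] by (auto simp: sgn_if)
  qed simp
  then obtain \<sigma> where \<sigma>: "\<And>s. s \<in> I \<Longrightarrow> sgn (R s) = \<sigma>"
    unfolding constant_on_def by blast
  obtain s where "s \<in> I" using False by blast
  then have "\<bar>\<sigma>\<bar> = 1" using \<sigma> assms(3) by (force simp: sgn_if)
  then show thesis using \<sigma> by (rule that)
qed (use that[of 1] in simp)

definition constant_angle :: "real set \<Rightarrow> (real \<Rightarrow> 'a::real_inner) \<Rightarrow> bool" where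
  "constant_angle I f \<longleftrightarrow> (\<exists>d c. norm d = 1 \<and> (\<forall>s\<in>I. (f s /\<^sub>R norm (f s)) \<bullet> d = c))"

lemma constant_angle_cong:
  "(\<And>s. s \<in> I \<Longrightarrow> f s = g s) \<Longrightarrow> constant_angle I f \<longleftrightarrow> constant_angle I g"
  by (simp add: constant_angle_def)

lemma constant_angle_unit:
  assumes "\<And>s. s \<in> I \<Longrightarrow> norm (f s) = 1"
  shows "constant_angle I f \<longleftrightarrow> (\<exists>d c. norm d = 1 \<and> (\<forall>s\<in>I. f s \<bullet> d = c))"
  using assms by (simp add: constant_angle_def)

lemma constant_angle_scaleR:
  assumes "is_interval I" "continuous_on I R" "\<And>s. s \<in> I \<Longrightarrow> R s \<noteq> 0"
  shows "constant_angle I (\<lambda>s. R s *\<^sub>R f s) \<longleftrightarrow> constant_angle I f"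
proof -
  obtain \<sigma> where \<sigma>: "\<bar>\<sigma>\<bar> = 1" "\<And>s. s \<in> I \<Longrightarrow> sgn (R s) = \<sigma>"
    using sgn_constant_on_interval[OF assms] by blast
  have dir: "(R s *\<^sub>R f s) /\<^sub>R norm (R s *\<^sub>R f s) = \<sigma> *\<^sub>R (f s /\<^sub>R norm (f s))" if "s \<in> I" for s
    using \<sigma>(2)[OF that, symmetric] assms(3)[OF that] by (simp add: sgn_if)
  have swap: "(\<sigma> *\<^sub>R u) \<bullet> d = u \<bullet> (\<sigma> *\<^sub>R d)" "norm (\<sigma> *\<^sub>R d) = norm d" for u d :: 'a
    using \<sigma>(1) by simp_all
  show ?thesis
    unfolding constant_angle_def
  proof (intro iffI; elim exE conjE)
    fix d c assume "norm d = 1" "\<forall>s\<in>I. ((R s *\<^sub>R f s) /\<^sub>R norm (R s *\<^sub>R f s)) \<bullet> d = c"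
    then show "\<exists>d c. norm d = 1 \<and> (\<forall>s\<in>I. (f s /\<^sub>R norm (f s)) \<bullet> d = c)"
      by (metis dir swap)
  next
    fix d c assume "norm d = 1" "\<forall>s\<in>I. (f s /\<^sub>R norm (f s)) \<bullet> d = c"
    moreover have "\<sigma> *\<^sub>R \<sigma> *\<^sub>R d = d" using \<sigma>(1) by (cases "\<sigma> < 0") auto
    ultimately show "\<exists>d c. norm d = 1 \<and> (\<forall>s\<in>I. ((R s *\<^sub>R f s) /\<^sub>R norm (R s *\<^sub>R f s)) \<bullet> d = c)"
      by (metis dir swap)
  qed
qed

lemma isophote_iff_constant_angle:
  "(\<And>s. s \<in> I \<Longrightarrow> norm (U s) = 1) \<Longrightarrow> isophote I U \<longleftrightarrow> constant_angle I U"
  by (simp add: isophote_def constant_angle_unit)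

lemma general_helix_iff_constant_angle:
  "(\<And>s. s \<in> I \<Longrightarrow> \<gamma> differentiable (at s) \<and> vector_derivative \<gamma> (at s) \<noteq> 0)
    \<Longrightarrow> general_helix I \<gamma> \<longleftrightarrow> constant_angle I (\<lambda>s. vector_derivative \<gamma> (at s))"
  by (simp add: general_helix_def constant_angle_def)

lemma Do_darboux_slant_helix_iff_constant_angle:
  "Do_darboux_slant_helix I T V kn tg \<longleftrightarrow> constant_angle I (osc_darboux T V kn tg)"
  by (simp add: Do_darboux_slant_helix_def constant_angle_def)

lemma general_helix_iff_isophote_if_tangent_normal:
  assumes "is_interval I" "continuous_on I R"
    and "\<And>s. s \<in> I \<Longrightarrow> (\<gamma> has_vector_derivative R s *\<^sub>R U s) (at s)"
    and "\<And>s. s \<in> I \<Longrightarrow> R s \<noteq> 0" "\<And>s. s \<in> I \<Longrightarrow> norm (U s) = 1"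
  shows "general_helix I \<gamma> \<longleftrightarrow> isophote I U"
proof -
  have "\<gamma> differentiable (at s) \<and> vector_derivative \<gamma> (at s) \<noteq> 0" if "s \<in> I" for s
    using assms(3-5)[OF that] differentiableI_vector vector_derivative_at by fastforce
  then have "general_helix I \<gamma> \<longleftrightarrow> constant_angle I (\<lambda>s. vector_derivative \<gamma> (at s))"
    by (rule general_helix_iff_constant_angle)
  also have "\<dots> \<longleftrightarrow> constant_angle I (\<lambda>s. R s *\<^sub>R U s)"
    using assms(3) by (intro constant_angle_cong vector_derivative_at)
  also have "\<dots> \<longleftrightarrow> isophote I U"
    using assms by (simp add: constant_angle_scaleR isophote_iff_constant_angle)
  finally show ?thesis .
qed

lemma cross3_frame_expansion:
  fixes u v x :: "real^3"
  assumes "u \<bullet> u = 1" "u \<bullet> v = 0"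
  shows "(v \<bullet> v) *\<^sub>R x
    = ((v \<bullet> v) * (x \<bullet> u)) *\<^sub>R u + (x \<bullet> v) *\<^sub>R v + (x \<bullet> cross3 u v) *\<^sub>R cross3 u v"
  using assms unfolding cross3_def inner_vec_def sum_3 vec_eq_iff forall_3
  by (simp add: vector_def) algebra

lemma bounded_bilinear_cross3: "bounded_bilinear (cross3 :: real^3 \<Rightarrow> real^3 \<Rightarrow> real^3)"
  using bilinear_conv_bounded_bilinear bilinear_cross by blast

locale regular_spherical_curve =
  fixes I :: "real set" and U U' U'' :: "real \<Rightarrow> real^3"
  assumes open_domain: "open I" and interval_domain: "is_interval I"
    and unit: "\<And>s. s \<in> I \<Longrightarrow> norm (U s) = 1"
    and first_derivative: "\<And>s. s \<in> I \<Longrightarrow> (U has_vector_derivative U' s) (at s)"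
    and second_derivative: "\<And>s. s \<in> I \<Longrightarrow> (U' has_vector_derivative U'' s) (at s)"
    and continuous_second_derivative: "continuous_on I U''"
    and regular: "\<And>s. s \<in> I \<Longrightarrow> U' s \<noteq> 0"
begin

definition W :: "real \<Rightarrow> real^3" where
  "W s = cross3 (U s) (U' s) /\<^sub>R norm (U' s)"

definition \<kappa> :: "real \<Rightarrow> real" where
  "\<kappa> s = (W s \<bullet> U'' s) / (U' s \<bullet> U' s)"

lemma inner_U_U: "s \<in> I \<Longrightarrow> U s \<bullet> U s = 1"
  using unit by (simp add: norm_eq_1)

lemma inner_U_U': "s \<in> I \<Longrightarrow> U s \<bullet> U' s = 0"
  using inner_derivative_eq_0_if_constant_on[OF open_domain _ first_derivative first_derivative inner_U_U]
  by (simp add: inner_commute)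

lemma inner_U_U'':
  assumes "s \<in> I"
  shows "U s \<bullet> U'' s = - (U' s \<bullet> U' s)"
  using inner_derivative_eq_0_if_constant_on[OF open_domain assms first_derivative[OF assms]
      second_derivative[OF assms] inner_U_U']
  by (simp add: eq_neg_iff_add_eq_0)

lemma inner_U'_U'_gt_0: "s \<in> I \<Longrightarrow> U' s \<bullet> U' s > 0"
  using regular by simp

lemma cross3_U_U': "s \<in> I \<Longrightarrow> cross3 (U s) (U' s) = norm (U' s) *\<^sub>R W s"
  using regular by (simp add: W_def)

lemma norm_cross3_U_U': "s \<in> I \<Longrightarrow> norm (cross3 (U s) (U' s)) = norm (U' s)"
  using norm_cross[of "U s" "U' s"] unit inner_U_U' by (simp add: power2_eq_iff_nonneg)

lemma inner_W_W: "s \<in> I \<Longrightarrow> W s \<bullet> W s = 1"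
  using regular norm_cross3_U_U' by (simp add: W_def power2_norm_eq_inner[symmetric])

lemma inner_W_U: "W s \<bullet> U s = 0" and inner_W_U': "W s \<bullet> U' s = 0"
  by (simp_all add: W_def dot_cross_self)

lemma frame_expansion:
  assumes "s \<in> I"
  shows "x = (x \<bullet> U s) *\<^sub>R U s + ((x \<bullet> U' s) / (U' s \<bullet> U' s)) *\<^sub>R U' s + (x \<bullet> W s) *\<^sub>R W s"
proof -
  let ?n2 = "U' s \<bullet> U' s"
  have "?n2 *\<^sub>R x = (?n2 * (x \<bullet> U s)) *\<^sub>R U s + (x \<bullet> U' s) *\<^sub>R U' s + (?n2 * (x \<bullet> W s)) *\<^sub>R W s"
    using cross3_frame_expansion[OF inner_U_U[OF assms] inner_U_U'[OF assms], of x]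
    by (simp add: cross3_U_U'[OF assms] power2_norm_eq_inner[symmetric] power2_eq_square)
  then have "x = inverse ?n2 *\<^sub>R ((?n2 * (x \<bullet> U s)) *\<^sub>R U s + (x \<bullet> U' s) *\<^sub>R U' s
      + (?n2 * (x \<bullet> W s)) *\<^sub>R W s)"
    using inner_U'_U'_gt_0[OF assms] by (metis less_irrefl scaleR_scaleR left_inverse scaleR_one)
  then show ?thesis
    using inner_U'_U'_gt_0[OF assms] by (simp add: scaleR_add_right field_simps)
qed

lemma continuous_on_U: "continuous_on I U"
  using first_derivative by (meson continuous_at_imp_continuous_on has_vector_derivative_continuous)

lemma continuous_on_U': "continuous_on I U'"
  using second_derivative by (meson continuous_at_imp_continuous_on has_vector_derivative_continuous)

lemma continuous_on_W: "continuous_on I W"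
  unfolding W_def[abs_def] using regular
  by (intro continuous_intros continuous_on_cross continuous_on_U continuous_on_U') auto

lemma continuous_on_\<kappa>: "continuous_on I \<kappa>"
  unfolding \<kappa>_def[abs_def] using regular
  by (intro continuous_intros continuous_on_W continuous_on_U' continuous_second_derivative) auto

lemma W_differentiable:
  assumes "s \<in> I"
  shows "W differentiable (at s)"
proof -
  have "(\<lambda>t. cross3 (U t) (U' t)) differentiable (at s)"
    using bounded_bilinear.has_vector_derivative[OF bounded_bilinear_cross3,
        OF first_derivative[OF assms] second_derivative[OF assms]]
    by (rule differentiableI_vector)
  moreover have "(\<lambda>t. norm (U' t)) differentiable (at s)"
    using differentiable_norm_at[OF regular[OF assms]] differentiableI_vector[OF second_derivative[OF assms]]
    by (rule differentiable_compose)
  ultimately show ?thesis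
    unfolding W_def[abs_def] using regular[OF assms] by (intro derivative_intros) auto
qed

lemma W_has_vector_derivative:
  assumes s: "s \<in> I"
  shows "(W has_vector_derivative - \<kappa> s *\<^sub>R U' s) (at s)"
proof -
  obtain W' where W': "(W has_vector_derivative W') (at s)"
    using W_differentiable[OF s] vector_derivative_works by blast
  have "W' \<bullet> W s = 0"
    using inner_derivative_eq_0_if_constant_on[OF open_domain s W' W' inner_W_W]
    by (simp add: inner_commute)
  moreover have "W' \<bullet> U s = 0"
    using inner_derivative_eq_0_if_constant_on[OF open_domain s W' first_derivative[OF s] inner_W_U]
    by (simp add: inner_W_U')
  moreover have "W' \<bullet> U' s = - (W s \<bullet> U'' s)"
    using inner_derivative_eq_0_if_constant_on[OF open_domain s W' second_derivative[OF s] inner_W_U']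
    by simp
  ultimately have "W' = - \<kappa> s *\<^sub>R U' s"
    using frame_expansion[OF s, of W'] by (simp add: \<kappa>_def)
  then show ?thesis using W' by simp
qed

lemma isophote_imp_W_constant_angle:
  assumes "isophote I U"
  obtains d c where "norm d = 1" "\<And>s. s \<in> I \<Longrightarrow> W s \<bullet> d = c"
proof -
  obtain l c where l: "norm l = 1" "\<And>s. s \<in> I \<Longrightarrow> U s \<bullet> l = c"
    using assms unfolding isophote_def by blast
  have "W s \<bullet> l \<in> {x. x\<^sup>2 = 1 - c\<^sup>2}" if s: "s \<in> I" for s
  proof -
    have "U' s \<bullet> l = 0"
      using inner_derivative_eq_0_if_constant_on[where g = "\<lambda>_. l",
          OF open_domain s first_derivative[OF s] has_vector_derivative_const l(2)]
      by simp
    have "l \<bullet> l = l \<bullet> ((l \<bullet> U s) *\<^sub>R U s + ((l \<bullet> U' s) / (U' s \<bullet> U' s)) *\<^sub>R U' s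
        + (l \<bullet> W s) *\<^sub>R W s)"
      by (subst frame_expansion[OF s]) (rule refl)
    also have "\<dots> = c * (U s \<bullet> l) + (W s \<bullet> l) * (W s \<bullet> l)"
      using \<open>U' s \<bullet> l = 0\<close> l(2)[OF s] by (simp add: inner_add_right inner_commute)
    finally show ?thesis
      using l by (simp add: power2_eq_square norm_eq_1 s)
  qed
  moreover have "continuous_on I (\<lambda>s. W s \<bullet> l)"
    by (intro continuous_intros continuous_on_W)
  ultimately have "(\<lambda>s. W s \<bullet> l) constant_on I"
    by (intro constant_on_if_finite_range[OF interval_domain _ finite_square_roots]) auto
  then show thesis
    using l(1) that unfolding constant_on_def by blast
qed

lemma curvature_mult_inner_U'_eq_0:
  assumes "\<And>s. s \<in> I \<Longrightarrow> W s \<bullet> d = c" "s \<in> I"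
  shows "\<kappa> s * (U' s \<bullet> d) = 0"
  using inner_derivative_eq_0_if_constant_on[where g = "\<lambda>_. d",
      OF open_domain assms(2) W_has_vector_derivative[OF assms(2)] has_vector_derivative_const assms(1)]
  by simp

lemma curvature_if_W_constant_angle:
  assumes d: "norm d = 1" and c: "\<And>s. s \<in> I \<Longrightarrow> W s \<bullet> d = c"
    and s: "s \<in> I" and "\<kappa> s \<noteq> 0"
  shows "c\<^sup>2 * ((\<kappa> s)\<^sup>2 + 1) = 1"
proof -
  define S where "S = I \<inter> \<kappa> -` (- {0})"
  have S: "open S" "s \<in> S"
    using continuous_open_preimage[OF continuous_on_\<kappa> open_domain open_Compl] s \<open>\<kappa> s \<noteq> 0\<close>
    by (auto simp: S_def)
  have U'_d: "U' t \<bullet> d = 0" if "t \<in> S" for t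
    using curvature_mult_inner_U'_eq_0[OF c] that by (auto simp: S_def)
  have U''_d: "U'' s \<bullet> d = 0"
    using inner_derivative_eq_0_if_constant_on[where g = "\<lambda>_. d",
        OF S second_derivative[OF s] has_vector_derivative_const U'_d]
    by simp
  define a where "a = d \<bullet> U s"
  have "d = (d \<bullet> U s) *\<^sub>R U s + ((d \<bullet> U' s) / (U' s \<bullet> U' s)) *\<^sub>R U' s + (d \<bullet> W s) *\<^sub>R W s"
    by (rule frame_expansion[OF s])
  also have "\<dots> = a *\<^sub>R U s + c *\<^sub>R W s"
    using U'_d[OF S(2)] c[OF s] by (simp add: a_def inner_commute)
  finally have d_eq: "d = a *\<^sub>R U s + c *\<^sub>R W s" .
  have "1 = d \<bullet> d"
    using d by (simp add: norm_eq_1)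
  also have "\<dots> = a * (d \<bullet> U s) + c * (d \<bullet> W s)"
    by (subst (2) d_eq) (simp add: inner_add_right)
  finally have unit_d: "1 = a\<^sup>2 + c\<^sup>2"
    using c[OF s] by (simp add: a_def inner_commute power2_eq_square)
  have "0 = a * (U'' s \<bullet> U s) + c * (U'' s \<bullet> W s)"
    using U''_d by (subst (asm) d_eq) (simp add: inner_add_right)
  also have "\<dots> = (c * \<kappa> s - a) * (U' s \<bullet> U' s)"
    using inner_U_U''[OF s] inner_U'_U'_gt_0[OF s]
    by (simp add: \<kappa>_def inner_commute algebra_simps)
  finally have "a = c * \<kappa> s"
    using inner_U'_U'_gt_0[OF s] by simp
  with unit_d show ?thesis
    by (simp add: power_mult_distrib algebra_simps)
qed

lemma curvature_constant_on_if_W_constant_angle: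
  assumes "norm d = 1" "\<And>s. s \<in> I \<Longrightarrow> W s \<bullet> d = c"
  shows "\<kappa> constant_on I"
proof (rule constant_on_if_finite_range[OF interval_domain continuous_on_\<kappa>])
  show "finite (insert 0 {x. x\<^sup>2 = (1 - c\<^sup>2) / c\<^sup>2})"
    by (simp add: finite_square_roots)
  show "\<kappa> s \<in> insert 0 {x. x\<^sup>2 = (1 - c\<^sup>2) / c\<^sup>2}" if "s \<in> I" for s
  proof (cases "\<kappa> s = 0")
    case False
    have "c\<^sup>2 * ((\<kappa> s)\<^sup>2 + 1) = 1"
      using curvature_if_W_constant_angle[OF assms that False] .
    moreover from this have "c \<noteq> 0"
      by auto
    ultimately show ?thesis
      by (simp add: field_simps)
  qed simp
qed

lemma W_constant_angle_imp_isophote: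
  assumes d: "norm d = 1" and c: "\<And>s. s \<in> I \<Longrightarrow> W s \<bullet> d = c"
  shows "isophote I U"
proof -
  obtain k where k: "\<And>s. s \<in> I \<Longrightarrow> \<kappa> s = k"
    using curvature_constant_on_if_W_constant_angle[OF assms] by (auto simp: constant_on_def)
  show ?thesis
  proof (cases "k = 0")
    case True
    then have "W constant_on I"
      using W_has_vector_derivative k
      by (intro constant_on_if_has_vector_derivative_0[OF interval_domain]) simp
    show ?thesis
    proof (cases "I = {}")
      case False
      then obtain s0 where s0: "s0 \<in> I" by blast
      have "U s \<bullet> W s0 = 0" if "s \<in> I" for s
        using \<open>W constant_on I\<close> that s0 inner_W_U by (metis constant_on_def inner_commute)
      moreover have "norm (W s0) = 1"
        using inner_W_W[OF s0] by (simp add: norm_eq_1)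
      ultimately show ?thesis
        unfolding isophote_def by blast
    qed (use d in \<open>auto simp: isophote_def\<close>)
  next
    case False
    have "((\<lambda>s. U s \<bullet> d) has_vector_derivative 0) (at s)" if s: "s \<in> I" for s
      using has_vector_derivative_inner[OF first_derivative[OF s] has_vector_derivative_const, of d]
        curvature_mult_inner_U'_eq_0[OF c s] k[OF s] False
      by simp
    then have "(\<lambda>s. U s \<bullet> d) constant_on I"
      by (rule constant_on_if_has_vector_derivative_0[OF interval_domain])
    then show ?thesis
      using d unfolding isophote_def constant_on_def by blast
  qed
qed

theorem isophote_iff_constant_angle_cross3:
  "isophote I U \<longleftrightarrow> constant_angle I (\<lambda>s. cross3 (U s) (U' s))"
proof -
  have "constant_angle I (\<lambda>s. cross3 (U s) (U' s)) \<longleftrightarrow> constant_angle I (\<lambda>s. norm (U' s) *\<^sub>R W s)"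
    by (rule constant_angle_cong) (rule cross3_U_U')
  also have "\<dots> \<longleftrightarrow> constant_angle I W"
    using regular by (intro constant_angle_scaleR interval_domain continuous_intros continuous_on_U') auto
  also have "\<dots> \<longleftrightarrow> (\<exists>d c. norm d = 1 \<and> (\<forall>s\<in>I. W s \<bullet> d = c))"
    using inner_W_W by (intro constant_angle_unit) (simp add: norm_eq_1)
  finally show ?thesis
    using isophote_imp_W_constant_angle W_constant_angle_imp_isophote by metis
qed

end

lemma darboux_frame_orthonormal:
  assumes "darboux_frame I \<alpha> T V U kg kn tg" "s \<in> I"
  shows "T s \<bullet> T s = 1" "V s \<bullet> V s = 1" "U s \<bullet> U s = 1"
    and "T s \<bullet> V s = 0" "T s \<bullet> U s = 0" "V s \<bullet> U s = 0"
    and "cross3 (U s) (T s) = V s" "cross3 (U s) (V s) = - T s"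
proof -
  have T: "norm (T s) = 1" and U: "norm (U s) = 1" and TU: "T s \<bullet> U s = 0"
    and V: "V s = cross3 (U s) (T s)"
    using assms unfolding darboux_frame_def by auto
  show TT: "T s \<bullet> T s = 1" and UU: "U s \<bullet> U s = 1"
    using T U by (simp_all add: norm_eq_1)
  show "T s \<bullet> U s = 0" "cross3 (U s) (T s) = V s"
    by (simp_all add: TU V)
  show "V s \<bullet> V s = 1" "cross3 (U s) (V s) = - T s"
    using TT UU TU by (simp_all add: V dot_cross Lagrange inner_commute)
  show "T s \<bullet> V s = 0" "V s \<bullet> U s = 0"
    by (simp_all add: V dot_cross_self)
qed

lemma darboux_frame_normal_derivative:
  assumes "darboux_frame I \<alpha> T V U kg kn tg" "s \<in> I"
  shows "vector_derivative U (at s) = - kn s *\<^sub>R T s - tg s *\<^sub>R V s"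
  using assms unfolding darboux_frame_def by (blast intro: vector_derivative_at)

lemma osc_darboux_eq_cross3:
  assumes "darboux_frame I \<alpha> T V U kg kn tg" "s \<in> I"
  shows "osc_darboux T V kn tg s = cross3 (U s) (vector_derivative U (at s))"
  using darboux_frame_orthonormal(7,8)[OF assms]
  by (simp add: darboux_frame_normal_derivative[OF assms] osc_darboux_def
      Cross3.right_diff_distrib cross_mult_right)

lemma inner_darboux_normal_derivative:
  assumes "darboux_frame I \<alpha> T V U kg kn tg" "s \<in> I"
  shows "vector_derivative U (at s) \<bullet> vector_derivative U (at s) = (kn s)\<^sup>2 + (tg s)\<^sup>2"
  using darboux_frame_orthonormal[OF assms]
  by (simp add: darboux_frame_normal_derivative[OF assms] inner_diff_left inner_diff_right
      inner_commute power2_eq_square)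

lemma darboux_frame_continuous_on_curvatures:
  assumes "darboux_frame I \<alpha> T V U kg kn tg" "open I" "smooth_on I U"
  shows "continuous_on I kn" "continuous_on I tg"
proof -
  have "continuous_on I (\<lambda>s. vector_derivative U (at s))"
    by (rule smooth_on_imp_continuous_on[OF smooth_on_vector_derivative[OF assms(3)]])
  moreover have "continuous_on I T" "continuous_on I V"
    using assms(1) unfolding darboux_frame_def
    by (meson continuous_at_imp_continuous_on has_vector_derivative_continuous)+
  ultimately have "continuous_on I (\<lambda>s. - (vector_derivative U (at s) \<bullet> T s))"
    "continuous_on I (\<lambda>s. - (vector_derivative U (at s) \<bullet> V s))"
    by (auto intro!: continuous_intros)
  moreover have "kn s = - (vector_derivative U (at s) \<bullet> T s)"
    and "tg s = - (vector_derivative U (at s) \<bullet> V s)" if "s \<in> I" for s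
    using darboux_frame_orthonormal[OF assms(1) that]
    by (simp_all add: darboux_frame_normal_derivative[OF assms(1) that]
        inner_diff_left inner_diff_right inner_commute)
  ultimately show "continuous_on I kn" "continuous_on I tg"
    by (auto cong: continuous_on_cong)
qed

lemma darboux_frame_normal_component_derivative:
  assumes frame: "darboux_frame I \<alpha> T V U kg kn tg" and s: "s \<in> I"
    and y: "(y1 has_real_derivative y1') (at s)" "(y2 has_real_derivative y2') (at s)"
      "(y3 has_real_derivative y3') (at s)"
    and v: "((\<lambda>s. \<alpha> s + y1 s *\<^sub>R T s + y2 s *\<^sub>R V s + y3 s *\<^sub>R U s) has_vector_derivative v) (at s)"
  shows "v \<bullet> U s = y1 s * kn s + y2 s * tg s + y3'"
proof -
  have "((\<lambda>s. \<alpha> s + y1 s *\<^sub>R T s + y2 s *\<^sub>R V s + y3 s *\<^sub>R U s) has_vector_derivative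
      T s + (y1 s *\<^sub>R (kg s *\<^sub>R V s + kn s *\<^sub>R U s) + y1' *\<^sub>R T s)
      + (y2 s *\<^sub>R (- kg s *\<^sub>R T s + tg s *\<^sub>R U s) + y2' *\<^sub>R V s)
      + (y3 s *\<^sub>R (- kn s *\<^sub>R T s - tg s *\<^sub>R V s) + y3' *\<^sub>R U s)) (at s)"
    using frame s unfolding darboux_frame_def
    by (intro has_vector_derivative_add has_vector_derivative_scaleR y) auto
  then have "v = T s + (y1 s *\<^sub>R (kg s *\<^sub>R V s + kn s *\<^sub>R U s) + y1' *\<^sub>R T s)
      + (y2 s *\<^sub>R (- kg s *\<^sub>R T s + tg s *\<^sub>R U s) + y2' *\<^sub>R V s)
      + (y3 s *\<^sub>R (- kn s *\<^sub>R T s - tg s *\<^sub>R V s) + y3' *\<^sub>R U s)"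
    using v vector_derivative_unique_at by blast
  then show ?thesis
    using darboux_frame_orthonormal[OF frame s]
    by (simp add: inner_add_right inner_diff_right inner_commute)
qed

lemma darboux_frame_regular_spherical_curve:
  assumes frame: "darboux_frame I \<alpha> T V U kg kn tg"
    and I: "open I" "is_interval I" and smooth: "smooth_on I U"
    and nondeg: "\<And>s. s \<in> I \<Longrightarrow> (kn s, tg s) \<noteq> (0, 0)"
  shows "regular_spherical_curve I U (\<lambda>s. vector_derivative U (at s))
    (\<lambda>s. vector_derivative (\<lambda>t. vector_derivative U (at t)) (at s))"
proof
  show "norm (U s) = 1" if "s \<in> I" for s
    using darboux_frame_orthonormal(3)[OF frame that] by (simp add: norm_eq_1)
  show "vector_derivative U (at s) \<noteq> 0" if "s \<in> I" for s
    using inner_darboux_normal_derivative[OF frame that] nondeg[OF that] by auto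
qed (use I smooth smooth_on_vector_derivative[OF smooth] in
    \<open>auto intro: smooth_on_has_vector_derivative smooth_on_imp_continuous_on
       smooth_on_vector_derivative\<close>)

lemma isophote_iff_Do_darboux_slant_helix:
  assumes frame: "darboux_frame I \<alpha> T V U kg kn tg"
    and "open I" "is_interval I" "smooth_on I U" "\<And>s. s \<in> I \<Longrightarrow> (kn s, tg s) \<noteq> (0, 0)"
  shows "isophote I U \<longleftrightarrow> Do_darboux_slant_helix I T V kn tg"
proof -
  interpret regular_spherical_curve I U "\<lambda>s. vector_derivative U (at s)"
    "\<lambda>s. vector_derivative (\<lambda>t. vector_derivative U (at t)) (at s)"
    by (rule darboux_frame_regular_spherical_curve[OF assms])
  show ?thesis
    unfolding Do_darboux_slant_helix_iff_constant_angle isophote_iff_constant_angle_cross3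
    by (rule constant_angle_cong) (simp add: osc_darboux_eq_cross3[OF frame])
qed

lemma continuous_on_associated_curve_speed:
  assumes frame: "darboux_frame I \<alpha> T V U kg kn tg" and I: "open I" and smooth: "smooth_on I U"
    and y: "smooth_on I y1" "smooth_on I y2" "smooth_on I y3"
    and speed: "\<And>s. s \<in> I \<Longrightarrow>
      ((\<lambda>s. \<alpha> s + y1 s *\<^sub>R T s + y2 s *\<^sub>R V s + y3 s *\<^sub>R U s) has_vector_derivative R s *\<^sub>R U s) (at s)"
  shows "continuous_on I R"
proof (rule continuous_on_eq)
  show "continuous_on I (\<lambda>s. y1 s * kn s + y2 s * tg s + vector_derivative y3 (at s))"
    by (intro continuous_intros darboux_frame_continuous_on_curvatures[OF frame I smooth]
        smooth_on_imp_continuous_on[OF y(1)] smooth_on_imp_continuous_on[OF y(2)]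
        smooth_on_imp_continuous_on[OF smooth_on_vector_derivative[OF y(3)]])
  fix s assume s: "s \<in> I"
  have y': "(y has_real_derivative vector_derivative y (at s)) (at s)" if "smooth_on I y" for y
    using smooth_on_has_vector_derivative[OF that I s]
    by (simp add: has_real_derivative_iff_has_vector_derivative)
  have "(R s *\<^sub>R U s) \<bullet> U s = y1 s * kn s + y2 s * tg s + vector_derivative y3 (at s)"
    by (rule darboux_frame_normal_component_derivative[OF frame s
          y'[OF y(1)] y'[OF y(2)] y'[OF y(3)] speed[OF s]])
  then show "y1 s * kn s + y2 s * tg s + vector_derivative y3 (at s) = R s"
    using darboux_frame_orthonormal(3)[OF frame s] by simp
qed

theorem theorem3p22:
  fixes I :: "real set"
    and \<alpha> T V U \<gamma> :: "real \<Rightarrow> real^3"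
    and kg kn tg y1 y2 y3 R :: "real \<Rightarrow> real"
  assumes I: "open I" "is_interval I" "I \<noteq> {}"
    and smooth: "smooth_on I \<alpha>" "smooth_on I U"
    and frame: "darboux_frame I \<alpha> T V U kg kn tg"
    and nondeg: "\<forall>s\<in>I. (kn s, tg s) \<noteq> (0, 0)"
    and ysmooth: "smooth_on I y1" "smooth_on I y2" "smooth_on I y3"
    and gamma: "\<gamma> = (\<lambda>s. \<alpha> s + y1 s *\<^sub>R T s + y2 s *\<^sub>R V s + y3 s *\<^sub>R U s)"
    and tangent: "\<forall>s\<in>I. (\<gamma> has_vector_derivative R s *\<^sub>R U s) (at s) \<and> R s \<noteq> 0"
  shows "(general_helix I \<gamma> \<longleftrightarrow> isophote I U) \<and>
         (isophote I U \<longleftrightarrow> Do_darboux_slant_helix I T V kn tg)"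
proof -
  have "continuous_on I R"
    using tangent unfolding gamma
    by (intro continuous_on_associated_curve_speed[OF frame I(1) smooth(2) ysmooth]) blast
  then have "general_helix I \<gamma> \<longleftrightarrow> isophote I U"
    using tangent darboux_frame_orthonormal(3)[OF frame]
    by (intro general_helix_iff_isophote_if_tangent_normal[OF I(2)]) (auto simp: norm_eq_1)
  moreover have "isophote I U \<longleftrightarrow> Do_darboux_slant_helix I T V kn tg"
    using nondeg by (intro isophote_iff_Do_darboux_slant_helix[OF frame I(1,2) smooth(2)]) blast
  ultimately show ?thesis
    by blast
qed

end
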